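(* For every integer $k>1$ there exists $g\in[\mathbb{F}_2,\mathbb{F}_2]$ such that $g\in G_{k-1}$ with $\varphi_j(g)=0$ for all $j<k$ and $\varphi_k(g)=-1$, and such that $g\in H_j$ with $\psi_j(g)=0$ for all $j\ge1$.
   Context: $\mathbb{F}_2$ is the free group on $x,y$. Let $\tilde K$ be the graph with vertex set $\mathbb{Z}^2$ and oriented edges $x^iy^jX$ from $(i,j)$ to $(i+1,j)$ and $x^iy^jY$ from $(i,j)$ to $(i,j+1)$. A $1$-chain is written $\alpha=P_\alpha(x,y)X+Q_\alpha(x,y)Y$ with $P_\alpha,Q_\alpha$ integer Laurent polynomials (coefficient of $x^iy^j$ in $P_\alpha$ = coefficient of edge $x^iy^jX$, similarly for $Q_\alpha$). For $g\in[\mathbb{F}_2,\mathbb{F}_2]$ written as a word in $x^{\pm1},y^{\pm1}$, the cycle $\alpha_g$ is the $1$-cycle traced by the lattice path from $(0,0)$ in which $x,x^{-1},y,y^{-1}$ move by $(1,0),(-1,0),(0,1),(0,-1)$ along the corresponding edges, each edge counted with sign $+1$ if traversed in its orientation and $-1$ otherwise; its homology class depends only on $g$. Put $f_g(y)=P_{\alpha_g}(1,y)$ and $g_g(x)=Q_{\alpha_g}(x,1)$. Set $G_0=H_0=[\mathbb{F}_2,\mathbb{F}_2]$ and inductively, for $k\ge1$, $\varphi_k(g)=f_g^{(k)}(1)/k!$ for $g\in G_{k-1}$, $\psi_k(g)=g_g^{(k)}(1)/k!$ for $g\in H_{k-1}$, $G_k=\ker\varphi_k$, $H_k=\ker\psi_k$.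 *)

theory Defs
  imports "HOL-Analysis.Analysis"
begin

datatype letter = Xp | Xm | Yp | Ym

type_synonym word = "letter list"

fun linv :: "letter \<Rightarrow> letter" where
  "linv Xp = Xm" | "linv Xm = Xp" | "linv Yp = Ym" | "linv Ym = Yp"

definition winv :: "word \<Rightarrow> word" where
  "winv w = rev (map linv w)"

text \<open>Words representing elements of the commutator subgroup [F_2,F_2]:
  products of commutators a^-1 b^-1 a b, closed under free (in)sertion/cancellation
  of pairs l l^-1 (i.e. under equality in F_2).\<close>
inductive comm_word :: "word \<Rightarrow> bool" where
  cw_nil: "comm_word []"
| cw_comm: "comm_word w \<Longrightarrow> comm_word (w @ winv a @ winv b @ a @ b)"
| cw_ins: "comm_word (u @ v) \<Longrightarrow> comm_word (u @ [l, linv l] @ v)"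
| cw_del: "comm_word (u @ [l, linv l] @ v) \<Longrightarrow> comm_word (u @ v)"

text \<open>Edges of the lattice graph: x^i y^j X is (i,j,DX), x^i y^j Y is (i,j,DY).\<close>
datatype dir = DX | DY

type_synonym edge = "int \<times> int \<times> dir"

text \<open>The 1-chain traced by the lattice path of a word starting at a given vertex.\<close>
fun chain :: "int \<times> int \<Rightarrow> word \<Rightarrow> edge \<Rightarrow> int" where
  "chain p [] = (\<lambda>e. 0)"
| "chain (i, j) (Xp # w) = (\<lambda>e. (if e = (i, j, DX) then 1 else 0) + chain (i + 1, j) w e)"
| "chain (i, j) (Xm # w) = (\<lambda>e. (if e = (i - 1, j, DX) then -1 else 0) + chain (i - 1, j) w e)"
| "chain (i, j) (Yp # w) = (\<lambda>e. (if e = (i, j, DY) then 1 else 0) + chain (i, j + 1) w e)"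
| "chain (i, j) (Ym # w) = (\<lambda>e. (if e = (i, j - 1, DY) then -1 else 0) + chain (i, j - 1) w e)"

definition alpha :: "word \<Rightarrow> edge \<Rightarrow> int" where
  "alpha w = chain (0, 0) w"

definition Pc :: "(edge \<Rightarrow> int) \<Rightarrow> int \<times> int \<Rightarrow> int" where
  "Pc a ij = a (fst ij, snd ij, DX)"

definition Qc :: "(edge \<Rightarrow> int) \<Rightarrow> int \<times> int \<Rightarrow> int" where
  "Qc a ij = a (fst ij, snd ij, DY)"

text \<open>f_g(y) = P_{alpha_g}(1,y) and g_g(x) = Q_{alpha_g}(x,1), as real functions.\<close>
definition fg :: "word \<Rightarrow> real \<Rightarrow> real" where
  "fg w y = (\<Sum>ij\<in>{ij. Pc (alpha w) ij \<noteq> 0}. of_int (Pc (alpha w) ij) * y powi (snd ij))"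

definition gg :: "word \<Rightarrow> real \<Rightarrow> real" where
  "gg w x = (\<Sum>ij\<in>{ij. Qc (alpha w) ij \<noteq> 0}. of_int (Qc (alpha w) ij) * x powi (fst ij))"

definition phi :: "nat \<Rightarrow> word \<Rightarrow> real" where
  "phi k w = (deriv ^^ k) (fg w) 1 / fact k"

definition psi :: "nat \<Rightarrow> word \<Rightarrow> real" where
  "psi k w = (deriv ^^ k) (gg w) 1 / fact k"

fun Gs :: "nat \<Rightarrow> word set" where
  "Gs 0 = {w. comm_word w}"
| "Gs (Suc k) = {w \<in> Gs k. phi (Suc k) w = 0}"

fun Hs :: "nat \<Rightarrow> word set" where
  "Hs 0 = {w. comm_word w}"
| "Hs (Suc k) = {w \<in> Hs k. psi (Suc k) w = 0}"

end

theory Submission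
  imports Defs "HOL-Library.Groups_Big_Fun"
begin

(* The witness is the iterated commutator g_n = [...[[y^-1, x], y^-1], ..., y^-1] with n
   outer commutators, where [a, b] = a^-1 b^-1 a b. If a is a closed loop, the cycle of [a, b]
   is the cycle of a shifted back by the displacement of b, minus the cycle of a; for b = y^-1
   this multiplies both P and Q by (y - 1). As g_0 has P = 1 - y, we get
   f_{g_n}(y) = -(y - 1)^(n+1), whereas for n >= 1 the factor y - 1 kills Q(x, 1), so g_{g_n} = 0.
   Reading off Taylor coefficients at 1 with n = k - 1 gives phi_j = -[j = k] and psi_j = 0. *)

fun letter_step :: "letter \<Rightarrow> int \<times> int" where
  "letter_step Xp = (1, 0)"
| "letter_step Xm = (-1, 0)"
| "letter_step Yp = (0, 1)"
| "letter_step Ym = (0, -1)"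

definition displacement :: "word \<Rightarrow> int \<times> int" where
  "displacement w = sum_list (map letter_step w)"

lemma displacement_Nil [simp]: "displacement [] = 0"
  and displacement_Cons [simp]: "displacement (l # w) = letter_step l + displacement w"
  by (simp_all add: displacement_def)

lemma displacement_append [simp]: "displacement (u @ v) = displacement u + displacement v"
  by (simp add: displacement_def)

lemma winv_Nil [simp]: "winv [] = []"
  and winv_Cons [simp]: "winv (l # u) = winv u @ [linv l]"
  by (simp_all add: winv_def)

lemma letter_step_linv [simp]: "letter_step (linv l) = - letter_step l"
  by (cases l) simp_all

lemma displacement_winv [simp]: "displacement (winv u) = - displacement u"
  by (induction u) simp_all

lemma chain_append: "chain p (u @ v) e = chain p u e + chain (p + displacement u) v e"
  by (induction p u rule: chain.induct) (auto simp: add.assoc[symmetric])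

lemma chain_translate: "chain (i + s, j + t) w (a + s, b + t, d) = chain (i, j) w (a, b, d)"
  by (induction "(i, j)" w arbitrary: i j rule: chain.induct) (auto simp: algebra_simps)

lemma chain_winv: "chain (p + displacement u) (winv u) e = - chain p u e"
  by (induction p u rule: chain.induct) (auto simp: chain_append add.assoc[symmetric])

lemma finite_support_add:
  fixes f g :: "'a \<Rightarrow> 'b::monoid_add"
  assumes "finite {a. f a \<noteq> 0}" and "finite {a. g a \<noteq> 0}"
  shows "finite {a. f a + g a \<noteq> 0}"
  by (rule finite_subset[OF _ finite_UnI[OF assms]]) auto

lemma finite_support_chain: "finite {e. chain p w e \<noteq> 0}"
  by (induction p w rule: chain.induct) (simp_all add: finite_support_add)

definition commutator :: "word \<Rightarrow> word \<Rightarrow> word" where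
  "commutator a b = winv a @ winv b @ a @ b"

lemma comm_word_commutator: "comm_word (commutator a b)"
  using cw_comm[OF cw_nil] by (simp add: commutator_def)

lemma displacement_commutator: "displacement (commutator a b) = 0"
  by (simp add: commutator_def)

lemma alpha_commutator:
  assumes a_closed: "displacement a = 0" and b_end: "displacement b = (s, t)"
  shows "alpha (commutator a b) (i, j, d) = alpha a (i + s, j + t, d) - alpha a (i, j, d)"
proof -
  have "chain (0, 0) (winv a) e = - alpha a e" for e
    using chain_winv[of "(0, 0)" a e] a_closed by (simp add: alpha_def zero_prod_def)
  moreover have "chain (0, 0) (winv b) e = - chain (- s, - t) b e" for e
    using chain_winv[of "(- s, - t)" b e] b_end by simp
  moreover have "chain (- s, - t) a (i, j, d) = alpha a (i + s, j + t, d)"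
    using chain_translate[of 0 "- s" 0 "- t" a "i + s" "j + t" d] by (simp add: alpha_def)
  ultimately show ?thesis
    using a_closed b_end by (simp add: alpha_def commutator_def chain_append zero_prod_def)
qed

lemma Sum_any_diff:
  fixes f g :: "'a \<Rightarrow> 'b::ab_group_add"
  assumes "finite {a. f a \<noteq> 0}" and "finite {a. g a \<noteq> 0}"
  shows "Sum_any (\<lambda>a. f a - g a) = Sum_any f - Sum_any g"
proof -
  have "Sum_any (\<lambda>a. - g a) = - Sum_any g"
    by (simp add: Sum_any.expand_set sum_negf)
  then show ?thesis
    using Sum_any.distrib[OF assms(1), of "\<lambda>a. - g a"] assms(2) by simp
qed

(* Only meaningful for finitely supported h: otherwise Sum_any gives 0. *)
definition laurent_eval :: "(int \<times> int \<Rightarrow> int) \<Rightarrow> real \<Rightarrow> real \<Rightarrow> real" where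
  "laurent_eval h x y = Sum_any (\<lambda>(i, j). of_int (h (i, j)) * x powi i * y powi j)"

lemma laurent_eval_shift_diff:
  assumes fin: "finite {ij. h ij \<noteq> 0}" and y: "y \<noteq> 0"
  shows "laurent_eval (\<lambda>(i, j). h (i, j - 1) - h (i, j)) x y = (y - 1) * laurent_eval h x y"
proof -
  define T where "T = (\<lambda>(i, j). of_int (h (i, j)) * x powi i * y powi j)"
  define S where "S = (\<lambda>(i, j). of_int (h (i, j - 1)) * x powi i * y powi j)"
  define up :: "int \<times> int \<Rightarrow> int \<times> int" where "up = (\<lambda>(i, j). (i, j + 1))"
  have bij_up: "bij up"
    by (rule o_bij[of "\<lambda>(i, j). (i, j - 1)"]) (auto simp: up_def)
  have S_up: "S \<circ> up = (\<lambda>ij. y * T ij)"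
    using y by (auto simp: S_def T_def up_def power_int_add_1')
  have fin_T: "finite {ij. T ij \<noteq> 0}"
    by (rule finite_subset[OF _ fin]) (auto simp: T_def)
  have "{ij. S ij \<noteq> 0} \<subseteq> up ` {ij. h ij \<noteq> 0}"
  proof clarify
    fix i j
    assume "S (i, j) \<noteq> 0"
    then have "(i, j - 1) \<in> {ij. h ij \<noteq> 0}" and "(i, j) = up (i, j - 1)"
      by (auto simp: S_def up_def)
    then show "(i, j) \<in> up ` {ij. h ij \<noteq> 0}"
      by blast
  qed
  then have fin_S: "finite {ij. S ij \<noteq> 0}"
    using fin finite_subset by blast
  have "laurent_eval (\<lambda>(i, j). h (i, j - 1) - h (i, j)) x y = Sum_any (\<lambda>ij. S ij - T ij)"
    unfolding laurent_eval_def by (rule Sum_any.cong) (auto simp: S_def T_def algebra_simps)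
  also have "\<dots> = Sum_any S - Sum_any T"
    by (rule Sum_any_diff[OF fin_S fin_T])
  also have "Sum_any S = y * Sum_any T"
    using Sum_any.reindex_cong[OF bij_up S_up] Sum_any_right_distrib[OF fin_T] by simp
  finally show ?thesis
    by (simp add: laurent_eval_def T_def algebra_simps)
qed

lemma finite_support_slice:
  assumes "finite {e. a e \<noteq> 0}"
  shows "finite {ij. a (fst ij, snd ij, d) \<noteq> 0}"
proof -
  have "{ij. a (fst ij, snd ij, d) \<noteq> 0} \<subseteq> (\<lambda>(i, j, _). (i, j)) ` {e. a e \<noteq> 0}"
    by (auto simp: image_iff)
  then show ?thesis
    using assms finite_subset by blast
qed

lemma finite_support_Pc: "finite {ij. Pc (alpha w) ij \<noteq> 0}"
  and finite_support_Qc: "finite {ij. Qc (alpha w) ij \<noteq> 0}"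
  unfolding Pc_def Qc_def alpha_def by (rule finite_support_slice[OF finite_support_chain])+

lemma fg_eq_laurent_eval: "fg w y = laurent_eval (Pc (alpha w)) 1 y"
  unfolding fg_def laurent_eval_def
  by (subst Sum_any.expand_superset[OF finite_support_Pc]) (auto intro: sum.cong)

lemma gg_eq_laurent_eval: "gg w x = laurent_eval (Qc (alpha w)) x 1"
  unfolding gg_def laurent_eval_def
  by (subst Sum_any.expand_superset[OF finite_support_Qc]) (auto intro: sum.cong)

fun iterated_commutator :: "nat \<Rightarrow> word" where
  "iterated_commutator 0 = commutator [Ym] [Xp]"
| "iterated_commutator (Suc n) = commutator (iterated_commutator n) [Ym]"

declare iterated_commutator.simps [simp del]

lemma comm_word_iterated_commutator: "comm_word (iterated_commutator n)"
  by (cases n) (simp_all add: iterated_commutator.simps comm_word_commutator)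

lemma alpha_iterated_commutator_Suc:
  "alpha (iterated_commutator (Suc n)) (i, j, d)
     = alpha (iterated_commutator n) (i, j - 1, d) - alpha (iterated_commutator n) (i, j, d)"
proof -
  have "displacement (iterated_commutator n) = 0"
    by (cases n) (simp_all add: iterated_commutator.simps displacement_commutator)
  then show ?thesis
    using alpha_commutator[of "iterated_commutator n" "[Ym]" 0 "-1"]
    by (simp add: iterated_commutator.simps)
qed

lemma fg_iterated_commutator_0: "fg (iterated_commutator 0) y = 1 - y"
proof -
  have "Pc (alpha (iterated_commutator 0))
      = (\<lambda>ij. if ij = (-1, 0) then 1 else if ij = (-1, 1) then -1 else 0)"
    by (auto simp: Pc_def alpha_def commutator_def iterated_commutator.simps)
  then have "{ij. Pc (alpha (iterated_commutator 0)) ij \<noteq> 0} = {(-1, 0), (-1, 1)}"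
    and "Pc (alpha (iterated_commutator 0)) (-1, 0) = 1"
    and "Pc (alpha (iterated_commutator 0)) (-1, 1) = -1"
    by auto
  then show ?thesis
    by (simp add: fg_def)
qed

lemma fg_iterated_commutator: "y \<noteq> 0 \<Longrightarrow> fg (iterated_commutator n) y = - ((y - 1) ^ Suc n)"
proof (induction n)
  case 0
  then show ?case by (simp add: fg_iterated_commutator_0)
next
  case (Suc n)
  have "Pc (alpha (iterated_commutator (Suc n)))
      = (\<lambda>(i, j). Pc (alpha (iterated_commutator n)) (i, j - 1)
                   - Pc (alpha (iterated_commutator n)) (i, j))"
    by (auto simp: Pc_def alpha_iterated_commutator_Suc)
  then have "fg (iterated_commutator (Suc n)) y = (y - 1) * fg (iterated_commutator n) y"
    using Suc.prems
    by (simp add: fg_eq_laurent_eval laurent_eval_shift_diff finite_support_Pc)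
  then show ?case
    using Suc by simp
qed

lemma gg_iterated_commutator_Suc: "gg (iterated_commutator (Suc n)) x = 0"
proof -
  have "Qc (alpha (iterated_commutator (Suc n)))
      = (\<lambda>(i, j). Qc (alpha (iterated_commutator n)) (i, j - 1)
                   - Qc (alpha (iterated_commutator n)) (i, j))"
    by (auto simp: Qc_def alpha_iterated_commutator_Suc)
  then show ?thesis
    by (simp add: gg_eq_laurent_eval laurent_eval_shift_diff finite_support_Qc)
qed

lemma higher_deriv_const_times_power:
  "(deriv ^^ n) (\<lambda>y::real. c * (y - a) ^ m)
     = (\<lambda>y. c * of_nat (\<Prod>i<n. m - i) * (y - a) ^ (m - n))"
proof (induction n)
  case (Suc n)
  define C where "C = c * of_nat (\<Prod>i<n. m - i)"
  have "((\<lambda>y. C * (y - a) ^ (m - n)) has_real_derivative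
      c * of_nat (\<Prod>i<Suc n. m - i) * (y - a) ^ (m - Suc n)) (at y)" for y
  proof -
    have "((\<lambda>y. C * (y - a) ^ (m - n)) has_real_derivative
        C * (of_nat (m - n) * (y - a) ^ (m - n - 1))) (at y)"
      by (auto intro!: derivative_eq_intros)
    moreover have "C * (of_nat (m - n) * (y - a) ^ (m - n - 1))
        = c * of_nat (\<Prod>i<Suc n. m - i) * (y - a) ^ (m - Suc n)"
      by (simp add: C_def)
    ultimately show ?thesis
      by metis
  qed
  then have "deriv (\<lambda>y. C * (y - a) ^ (m - n))
      = (\<lambda>y. c * of_nat (\<Prod>i<Suc n. m - i) * (y - a) ^ (m - Suc n))"
    by (intro ext DERIV_imp_deriv)
  then show ?case
    by (simp add: Suc.IH C_def)
qed simp

lemma higher_deriv_zero: "(deriv ^^ n) (\<lambda>y::real. 0) = (\<lambda>y. 0)"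
  by (induction n) (auto intro!: DERIV_imp_deriv)

lemma taylor_coeff_power:
  fixes f :: "real \<Rightarrow> real"
  assumes "eventually (\<lambda>y. f y = c * (y - a) ^ m) (nhds a)"
  shows "(deriv ^^ n) f a / fact n = (if n = m then c else 0)"
proof -
  have "(deriv ^^ n) f a = c * of_nat (\<Prod>i<n. m - i) * 0 ^ (m - n)"
    using higher_deriv_cong_ev[OF assms refl] by (simp add: higher_deriv_const_times_power)
  moreover have "(\<Prod>i<m. m - i) = fact m"
    by (simp add: fact_prod_rev atLeast0LessThan)
  moreover have "(\<Prod>i<n. m - i) = 0" if "m < n"
    using that by (auto simp: prod_zero_iff)
  ultimately show ?thesis
    by (cases n m rule: linorder_cases) simp_all
qed

lemma Gs_iff: "w \<in> Gs n \<longleftrightarrow> comm_word w \<and> (\<forall>j. 1 \<le> j \<and> j \<le> n \<longrightarrow> phi j w = 0)"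
  by (induction n) (auto simp: le_Suc_eq)

lemma Hs_iff: "w \<in> Hs n \<longleftrightarrow> comm_word w \<and> (\<forall>j. 1 \<le> j \<and> j \<le> n \<longrightarrow> psi j w = 0)"
  by (induction n) (auto simp: le_Suc_eq)

theorem proposition4p1:
  fixes k :: nat
  assumes "k > 1"
  shows "\<exists>w. comm_word w \<and> w \<in> Gs (k - 1) \<and> (\<forall>j. 1 \<le> j \<and> j < k \<longrightarrow> phi j w = 0)
           \<and> phi k w = -1 \<and> (\<forall>j\<ge>1. w \<in> Hs j \<and> psi j w = 0)"
proof -
  define w where "w = iterated_commutator (k - 1)"
  have "eventually (\<lambda>y. y \<noteq> (0::real)) (nhds 1)"
    by (rule t1_space_nhds) simp
  then have "eventually (\<lambda>y. fg w y = -1 * (y - 1) ^ k) (nhds 1)"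
    by eventually_elim (use assms in \<open>simp add: w_def fg_iterated_commutator\<close>)
  then have phi_w: "phi j w = (if j = k then -1 else 0)" for j
    unfolding phi_def by (rule taylor_coeff_power)
  have "k - 1 = Suc (k - 2)"
    using assms by simp
  then have "gg w = (\<lambda>x. 0)"
    by (simp add: w_def fun_eq_iff gg_iterated_commutator_Suc)
  then have psi_w: "psi j w = 0" for j
    by (simp add: psi_def higher_deriv_zero)
  have "comm_word w"
    by (simp add: w_def comm_word_iterated_commutator)
  with phi_w psi_w show ?thesis
    by (intro exI[of _ w]) (auto simp: Gs_iff Hs_iff)
qed

end
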